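(* Let $p\in(1,\infty)$, $q=p/(p-1)$, $R_0\in\mathbb{R}^{\mathcal{S}\times\mathcal{A}}$, $\alpha>0$ and $\mathcal{R}_p=\{R:\|R-R_0\|_p\le\alpha\}$. For every stationary policy $\pi\in\Pi$ and every $(s,a)\in\mathcal{S}\times\mathcal{A}$, $$Q^\pi_{\mathcal{R}_p}(s,a)=R_0(s,a)+\gamma\sum_{s'}P(s'|s,a)\,v^\pi_{\mathcal{R}_p}(s')-\alpha\left(\frac{d^\pi(s,a)}{\|d^\pi\|_q}\right)^{q-1}.$$
   Context: Finite MDP with finite state space $\mathcal{S}$, finite action space $\mathcal{A}$, transition kernel $P$, discount $\gamma\in[0,1)$, initial distribution $\mu$ with $\mu(s)>0$ for all $s$. $\Pi$: stationary randomized policies, $\pi_s(a)=\pi(a|s)$; $R^\pi(s)=\sum_a\pi_s(a)R(s,a)$, $P^\pi(s'|s)=\sum_a\pi_s(a)P(s'|s,a)$; $v^\pi_R=(I-\gamma P^\pi)^{-1}R^\pi$ and $Q^\pi_R(s,a)=R(s,a)+\gamma\sum_{s'}P(s'|s,a)v^\pi_R(s')$. Occupancy: $d^\pi=\mu^\top(I-\gamma P^\pi)^{-1}$, $d^\pi(s,a)=d^\pi(s)\pi_s(a)$, $\|d^\pi\|_q$ the $L_q$ norm over $\mathcal{S}\times\mathcal{A}$. Return $\rho^\pi_R=\sum_{s,a}d^\pi(s,a)R(s,a)$. $R^\pi_p$ is the (unique) minimizer of $R\mapsto\rho^\pi_R$ over $\mathcal{R}_p$; $v^\pi_{\mathcal{R}_p}:=v^\pi_{R^\pi_p}$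 and $Q^\pi_{\mathcal{R}_p}:=Q^\pi_{R^\pi_p}$. *)

theory Defs
  imports "HOL-Analysis.Analysis"
begin

text \<open>Finite MDP: states 's, actions 'a (finite types). Transition kernel
  P s a s' = P(s'|s,a); policies pol s a = pol(a|s); rewards R s a.\<close>

definition stochastic_kernel :: "('s::finite \<Rightarrow> 'a::finite \<Rightarrow> 's \<Rightarrow> real) \<Rightarrow> bool" where
  "stochastic_kernel P \<longleftrightarrow> (\<forall>s a s'. P s a s' \<ge> 0) \<and> (\<forall>s a. (\<Sum>s'\<in>UNIV. P s a s') = 1)"

definition policy :: "('s::finite \<Rightarrow> 'a::finite \<Rightarrow> real) \<Rightarrow> bool" where
  "policy pol \<longleftrightarrow> (\<forall>s a. pol s a \<ge> 0) \<and> (\<forall>s. (\<Sum>a\<in>UNIV. pol s a) = 1)"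

definition Ppi :: "('s::finite \<Rightarrow> 'a::finite \<Rightarrow> 's \<Rightarrow> real) \<Rightarrow> ('s \<Rightarrow> 'a \<Rightarrow> real) \<Rightarrow> real^'s^'s" where
  "Ppi P pol = (\<chi> s s'. \<Sum>a\<in>UNIV. pol s a * P s a s')"

definition Rpi :: "('s::finite \<Rightarrow> 'a::finite \<Rightarrow> real) \<Rightarrow> ('s \<Rightarrow> 'a \<Rightarrow> real) \<Rightarrow> real^'s" where
  "Rpi R pol = (\<chi> s. \<Sum>a\<in>UNIV. pol s a * R s a)"

definition vfun :: "('s::finite \<Rightarrow> 'a::finite \<Rightarrow> 's \<Rightarrow> real) \<Rightarrow> real \<Rightarrow> ('s \<Rightarrow> 'a \<Rightarrow> real) \<Rightarrow> ('s \<Rightarrow> 'a \<Rightarrow> real) \<Rightarrow> real^'s" where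
  "vfun P \<gamma> pol R = matrix_inv (mat 1 - \<gamma> *\<^sub>R Ppi P pol) *v Rpi R pol"

definition Qfun :: "('s::finite \<Rightarrow> 'a::finite \<Rightarrow> 's \<Rightarrow> real) \<Rightarrow> real \<Rightarrow> ('s \<Rightarrow> 'a \<Rightarrow> real) \<Rightarrow> ('s \<Rightarrow> 'a \<Rightarrow> real) \<Rightarrow> 's \<Rightarrow> 'a \<Rightarrow> real" where
  "Qfun P \<gamma> pol R s a = R s a + \<gamma> * (\<Sum>s'\<in>UNIV. P s a s' * vfun P \<gamma> pol R $ s')"

definition dstate :: "('s::finite \<Rightarrow> 'a::finite \<Rightarrow> 's \<Rightarrow> real) \<Rightarrow> real \<Rightarrow> ('s \<Rightarrow> real) \<Rightarrow> ('s \<Rightarrow> 'a \<Rightarrow> real) \<Rightarrow> real^'s" where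
  "dstate P \<gamma> \<mu> pol = (\<chi> s. \<mu> s) v* matrix_inv (mat 1 - \<gamma> *\<^sub>R Ppi P pol)"

definition docc :: "('s::finite \<Rightarrow> 'a::finite \<Rightarrow> 's \<Rightarrow> real) \<Rightarrow> real \<Rightarrow> ('s \<Rightarrow> real) \<Rightarrow> ('s \<Rightarrow> 'a \<Rightarrow> real) \<Rightarrow> 's \<Rightarrow> 'a \<Rightarrow> real" where
  "docc P \<gamma> \<mu> pol s a = dstate P \<gamma> \<mu> pol $ s * pol s a"

definition lpnorm :: "real \<Rightarrow> ('s::finite \<Rightarrow> 'a::finite \<Rightarrow> real) \<Rightarrow> real" where
  "lpnorm p f = (\<Sum>(s,a)\<in>UNIV. \<bar>f s a\<bar> powr p) powr (1 / p)"

definition ret :: "('s::finite \<Rightarrow> 'a::finite \<Rightarrow> 's \<Rightarrow> real) \<Rightarrow> real \<Rightarrow> ('s \<Rightarrow> real) \<Rightarrow> ('s \<Rightarrow> 'a \<Rightarrow> real) \<Rightarrow> ('s \<Rightarrow> 'a \<Rightarrow> real) \<Rightarrow> real" where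
  "ret P \<gamma> \<mu> pol R = (\<Sum>(s,a)\<in>UNIV. docc P \<gamma> \<mu> pol s a * R s a)"

definition Rball :: "real \<Rightarrow> ('s::finite \<Rightarrow> 'a::finite \<Rightarrow> real) \<Rightarrow> real \<Rightarrow> ('s \<Rightarrow> 'a \<Rightarrow> real) set" where
  "Rball p R0 \<alpha> = {R. lpnorm p (\<lambda>s a. R s a - R0 s a) \<le> \<alpha>}"

definition Rworst :: "('s::finite \<Rightarrow> 'a::finite \<Rightarrow> 's \<Rightarrow> real) \<Rightarrow> real \<Rightarrow> ('s \<Rightarrow> real) \<Rightarrow> ('s \<Rightarrow> 'a \<Rightarrow> real) \<Rightarrow> real \<Rightarrow> ('s \<Rightarrow> 'a \<Rightarrow> real) \<Rightarrow> real \<Rightarrow> ('s \<Rightarrow> 'a \<Rightarrow> real)" where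
  "Rworst P \<gamma> \<mu> pol p R0 \<alpha> = (THE R. R \<in> Rball p R0 \<alpha> \<and> (\<forall>R'\<in>Rball p R0 \<alpha>. ret P \<gamma> \<mu> pol R \<le> ret P \<gamma> \<mu> pol R'))"

end

theory Submission
  imports Defs
begin

(* The return is linear in the reward, rho_R = <d, R> with d the state-action occupancy, so
   minimising it over the ball ||R - R0||_p <= alpha means maximising <d, R0 - R> over
   ||R0 - R||_p <= alpha. By Hoelder's inequality, together with its equality case (which
   comes from the strict Young inequality), the unique maximiser is alpha (d / ||d||_q)^(q-1),
   provided d is nonnegative and nonzero. Both hold because (I - gamma P^pi)^-1 is entrywise
   nonnegative, by a minimum principle for the row-stochastic matrix P^pi, and hence d >= mu > 0.
   Substituting the resulting worst-case reward into the definition of Q gives the formula. *)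

lemma powr_less_tangent_line:
  fixes r t :: real
  assumes r: "0 < r" "r < 1" and t: "0 < t" "t \<noteq> 1"
  shows "t powr r < 1 + r * (t - 1)"
proof -
  define h where "h x = x powr r - r * x" for x :: real
  have h_deriv: "DERIV h x :> r * (x powr (r - 1) - 1)" if "0 < x" for x
    unfolding h_def using that by (auto intro!: derivative_eq_intros simp: algebra_simps)
  have h_cont: "continuous_on {a..b} h" if "0 < a" for a b
    unfolding h_def using that by (intro continuous_intros) auto
  have "h t < h 1"
  proof (cases "t < 1")
    case True
    show ?thesis
    proof (rule DERIV_pos_imp_increasing_open[OF True _ h_cont[OF t(1)]])
      fix x assume x: "t < x" "x < 1"
      then have "1 < x powr (r - 1)"
        using t r powr_less_mono2_neg[of "r - 1" x 1] by simp
      then show "\<exists>y. DERIV h x :> y \<and> 0 < y"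
        using h_deriv[of x] x t r by auto
    qed
  next
    case False
    with t have "1 < t" by simp
    then show ?thesis
    proof (rule DERIV_neg_imp_decreasing_open[OF _ _ h_cont])
      fix x assume x: "1 < x" "x < t"
      then have "x powr (r - 1) < 1"
        using r powr_less_mono2_neg[of "r - 1" 1 x] by simp
      then show "\<exists>y. DERIV h x :> y \<and> y < 0"
        using h_deriv[of x] x r by (auto simp: mult_pos_neg)
    qed simp
  qed
  then show ?thesis by (simp add: h_def algebra_simps)
qed

lemma conjugate_exponent:
  fixes p :: real
  assumes "1 < p"
  shows "1 < p / (p - 1)" and "1/p + 1 / (p / (p - 1)) = 1"
  using assms by (simp_all add: field_simps)

lemma conjugate_exponent_div:
  fixes p q :: real
  assumes pq: "1/p + 1/q = 1" and "q \<noteq> 0"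
  shows "q / p = q - 1"
proof -
  have "q / p = q * (1/p)" by simp
  also have "1/p = 1 - 1/q" using pq by simp
  finally show ?thesis using \<open>q \<noteq> 0\<close> by (simp add: right_diff_distrib)
qed

lemma Youngs_inequality_strict:
  fixes p q a b :: real
  assumes p: "1 < p" and q: "1 < q" and pq: "1/p + 1/q = 1" and a: "0 \<le> a" and b: "0 \<le> b"
    and neq: "a powr p \<noteq> b powr q"
  shows "a * b < a powr p / p + b powr q / q"
proof (cases "a = 0 \<or> b = 0")
  case True
  then show ?thesis using neq p q a b by auto
next
  case False
  with a b have "0 < a" "0 < b" by auto
  define u v where "u = a powr p" and "v = b powr q"
  have uv: "0 < u" "0 < v" "u / v \<noteq> 1" using \<open>0 < a\<close> \<open>0 < b\<close> neq by (auto simp: u_def v_def)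
  have "a * b = v * (u / v) powr (1/p)"
  proof -
    have "(u / v) powr (1/p) = a / b powr (q/p)"
      using \<open>0 < a\<close> \<open>0 < b\<close> p by (simp add: u_def v_def powr_divide powr_powr)
    moreover have "q / p = q - 1" using conjugate_exponent_div[OF pq] q by simp
    ultimately show ?thesis
      using \<open>0 < b\<close> by (simp add: v_def powr_diff field_simps)
  qed
  also have "\<dots> < v * (1 + 1/p * (u / v - 1))"
    using powr_less_tangent_line[of "1/p" "u / v"] uv p by simp
  also have "\<dots> = u / p + v * (1 - 1/p)"
    using uv p by (simp add: field_simps)
  also have "\<dots> = u / p + v / q"
    using pq by (metis add_diff_cancel_left' times_divide_eq_right mult_1_right)
  finally show ?thesis by (simp add: u_def v_def)
qed

definition pnorm :: "real \<Rightarrow> ('i::finite \<Rightarrow> real) \<Rightarrow> real" where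
  "pnorm p f = (\<Sum>i\<in>UNIV. \<bar>f i\<bar> powr p) powr (1/p)"

lemma pnorm_powr: "0 < p \<Longrightarrow> pnorm p f powr p = (\<Sum>i\<in>UNIV. \<bar>f i\<bar> powr p)"
  by (simp add: pnorm_def powr_powr sum_nonneg)

lemma pnorm_pos:
  fixes f :: "'i::finite \<Rightarrow> real"
  assumes "0 < p" and "f i \<noteq> 0"
  shows "0 < pnorm p f"
proof -
  have "0 < \<bar>f i\<bar> powr p" using assms by simp
  also have "\<dots> \<le> (\<Sum>j\<in>UNIV. \<bar>f j\<bar> powr p)" by (rule member_le_sum) auto
  finally show ?thesis by (simp add: pnorm_def)
qed

lemma sum_powr_div_pnorm:
  fixes w :: "'i::finite \<Rightarrow> real"
  assumes "0 < q" and "0 < pnorm q w"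
  shows "(\<Sum>i\<in>UNIV. (\<bar>w i\<bar> / pnorm q w) powr q) = 1"
proof -
  have "(\<Sum>i\<in>UNIV. \<bar>w i\<bar> powr q) = pnorm q w powr q"
    using assms by (simp add: pnorm_powr)
  then show ?thesis
    using assms by (simp add: powr_divide flip: sum_divide_distrib)
qed

lemma Holder_normalized:
  fixes a b :: "'i::finite \<Rightarrow> real"
  assumes p: "1 < p" and q: "1 < q" and pq: "1/p + 1/q = 1"
    and a: "\<And>i. 0 \<le> a i" and b: "\<And>i. 0 \<le> b i"
    and sum_a: "(\<Sum>i\<in>UNIV. a i powr p) \<le> 1" and sum_b: "(\<Sum>i\<in>UNIV. b i powr q) = 1"
  shows "(\<Sum>i\<in>UNIV. a i * b i) \<le> 1"
    and "(\<Sum>i\<in>UNIV. a i * b i) = 1 \<Longrightarrow> a i powr p = b i powr q"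
proof -
  define young where "young i = a i powr p / p + b i powr q / q" for i
  have le_young: "a i * b i \<le> young i" for i
    unfolding young_def using Youngs_inequality[OF p q pq a b] .
  have sum_le: "(\<Sum>i\<in>UNIV. a i * b i) \<le> (\<Sum>i\<in>UNIV. young i)"
    by (intro sum_mono le_young)
  have "(\<Sum>i\<in>UNIV. young i) = (\<Sum>i\<in>UNIV. a i powr p) / p + 1/q"
    by (simp add: young_def sum.distrib sum_b flip: sum_divide_distrib)
  also have "\<dots> \<le> 1/p + 1/q"
    using sum_a p by (simp add: divide_right_mono)
  finally have sum_young_le: "(\<Sum>i\<in>UNIV. young i) \<le> 1" using pq by simp
  with sum_le show "(\<Sum>i\<in>UNIV. a i * b i) \<le> 1" by linarith
  assume "(\<Sum>i\<in>UNIV. a i * b i) = 1"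
  with sum_le sum_young_le have "(\<Sum>i\<in>UNIV. a i * b i) = (\<Sum>i\<in>UNIV. young i)" by linarith
  then have "a i * b i = young i"
    by (rule sum_mono_inv) (auto intro: le_young)
  then show "a i powr p = b i powr q"
    using Youngs_inequality_strict[OF p q pq a b, of i i] unfolding young_def by (metis less_irrefl)
qed

lemma pnorm_dual_le:
  fixes w y :: "'i::finite \<Rightarrow> real"
  assumes p: "1 < p" and q: "1 < q" and pq: "1/p + 1/q = 1"
    and w: "\<And>i. 0 \<le> w i" and c: "0 < pnorm q w" and \<alpha>: "0 < \<alpha>" and y: "pnorm p y \<le> \<alpha>"
  shows "(\<Sum>i\<in>UNIV. w i * y i) \<le> \<alpha> * pnorm q w"
    and "(\<Sum>i\<in>UNIV. w i * y i) = \<alpha> * pnorm q w \<Longrightarrow> y = (\<lambda>i. \<alpha> * (w i / pnorm q w) powr (q - 1))"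
proof -
  define c where "c = pnorm q w"
  define a b where "a i = \<bar>y i\<bar> / \<alpha>" and "b i = w i / c" for i
  have a: "0 \<le> a i" and b: "0 \<le> b i" for i
    using \<alpha> c w by (simp_all add: a_def b_def c_def)
  have "(\<Sum>i\<in>UNIV. \<bar>y i\<bar> powr p) = pnorm p y powr p"
    using p by (simp add: pnorm_powr)
  also have "\<dots> \<le> \<alpha> powr p"
    using y p by (intro powr_mono2) (auto simp: pnorm_def)
  finally have sum_a: "(\<Sum>i\<in>UNIV. a i powr p) \<le> 1"
    using \<alpha> by (simp add: a_def powr_divide flip: sum_divide_distrib)
  have sum_b: "(\<Sum>i\<in>UNIV. b i powr q) = 1"
    using sum_powr_div_pnorm[of q w] q c w by (simp add: b_def c_def)
  note Holder = Holder_normalized[OF p q pq a b sum_a sum_b]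
  have wy_le: "(\<Sum>i\<in>UNIV. w i * y i) \<le> (\<Sum>i\<in>UNIV. w i * \<bar>y i\<bar>)"
    using w by (intro sum_mono mult_left_mono) auto
  have wy_abs: "(\<Sum>i\<in>UNIV. w i * \<bar>y i\<bar>) = \<alpha> * c * (\<Sum>i\<in>UNIV. a i * b i)"
    using \<alpha> c by (simp add: a_def b_def c_def sum_distrib_left mult.commute)
  have \<alpha>c: "0 < \<alpha> * c" using \<alpha> c by (simp add: c_def)
  have abc_le: "\<alpha> * c * (\<Sum>i\<in>UNIV. a i * b i) \<le> \<alpha> * c"
    using mult_left_mono[OF Holder(1), of "\<alpha> * c"] \<alpha>c by simp
  with wy_le wy_abs show "(\<Sum>i\<in>UNIV. w i * y i) \<le> \<alpha> * pnorm q w"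
    by (simp add: c_def)
  assume eq: "(\<Sum>i\<in>UNIV. w i * y i) = \<alpha> * pnorm q w"
  \<comment> \<open>Then both estimates are tight, termwise: w y = w \<bar>y\<bar>, and equality in Young's inequality.\<close>
  from abc_le have sum_wy: "(\<Sum>i\<in>UNIV. w i * y i) = (\<Sum>i\<in>UNIV. w i * \<bar>y i\<bar>)"
    and "\<alpha> * c * (\<Sum>i\<in>UNIV. a i * b i) = \<alpha> * c"
    using eq wy_le wy_abs by (simp_all add: c_def)
  then have sum_ab: "(\<Sum>i\<in>UNIV. a i * b i) = 1" using \<alpha> c by (simp add: c_def)
  show "y = (\<lambda>i. \<alpha> * (w i / pnorm q w) powr (q - 1))"
  proof
    fix i
    have "a i = (a i powr p) powr (1/p)"
      using a p by (simp add: powr_powr)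
    also have "\<dots> = b i powr (q - 1)"
      using Holder(2)[OF sum_ab] b q pq conjugate_exponent_div[OF pq]
      by (simp add: powr_powr)
    finally have a_eq: "a i = b i powr (q - 1)" .
    show "y i = \<alpha> * (w i / pnorm q w) powr (q - 1)"
    proof (cases "w i = 0")
      case True
      then show ?thesis using a_eq \<alpha> by (simp add: a_def b_def)
    next
      case False
      have "w i * y i = w i * \<bar>y i\<bar>"
        by (rule sum_mono_inv[OF sum_wy]) (use w in \<open>auto intro: mult_left_mono\<close>)
      then have "y i = \<bar>y i\<bar>" using False by simp
      then show ?thesis using a_eq \<alpha> by (simp add: a_def b_def c_def field_simps)
    qed
  qed
qed

lemma pnorm_dual_attained:
  fixes w :: "'i::finite \<Rightarrow> real"
  assumes p: "1 < p" and q: "1 < q" and pq: "1/p + 1/q = 1"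
    and w: "\<And>i. 0 \<le> w i" and c: "0 < pnorm q w" and \<alpha>: "0 \<le> \<alpha>"
  defines "y \<equiv> \<lambda>i. \<alpha> * (w i / pnorm q w) powr (q - 1)"
  shows "pnorm p y = \<alpha>" and "(\<Sum>i\<in>UNIV. w i * y i) = \<alpha> * pnorm q w"
proof -
  define c where "c = pnorm q w"
  have sum_b: "(\<Sum>i\<in>UNIV. (w i / c) powr q) = 1"
    using sum_powr_div_pnorm[of q w] q c w by (simp add: c_def)
  have "(q - 1) * p = q"
    using conjugate_exponent_div[OF pq] q p by (simp add: field_simps)
  then have "\<bar>y i\<bar> powr p = \<alpha> powr p * (w i / c) powr q" for i
    using \<alpha> w by (simp add: y_def c_def abs_mult powr_mult powr_powr)
  then have "(\<Sum>i\<in>UNIV. \<bar>y i\<bar> powr p) = \<alpha> powr p"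
    by (simp add: sum_b flip: sum_distrib_left)
  then show "pnorm p y = \<alpha>"
    using \<alpha> p by (simp add: pnorm_def powr_powr)
  have "w i * y i = \<alpha> * c * (w i / c) powr q" for i
  proof -
    have "w i * y i = \<alpha> * c * ((w i / c) * (w i / c) powr (q - 1))"
      using c by (simp add: y_def c_def)
    also have "(w i / c) * (w i / c) powr (q - 1) = (w i / c) powr q"
      using powr_mult_base[of "w i / c" "q - 1"] w c by (simp add: c_def)
    finally show ?thesis .
  qed
  then have "(\<Sum>i\<in>UNIV. w i * y i) = \<alpha> * c * (\<Sum>i\<in>UNIV. (w i / c) powr q)"
    by (simp add: sum_distrib_left)
  then show "(\<Sum>i\<in>UNIV. w i * y i) = \<alpha> * pnorm q w"
    unfolding c_def[symmetric] sum_b by simp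
qed

lemma linear_min_on_pball:
  fixes w R0 Rmin R :: "'i::finite \<Rightarrow> real"
  assumes p: "1 < p" and q: "1 < q" and pq: "1/p + 1/q = 1"
    and w: "\<And>i. 0 \<le> w i" and c: "0 < pnorm q w" and \<alpha>: "0 < \<alpha>"
    and Rmin: "\<And>i. Rmin i = R0 i - \<alpha> * (w i / pnorm q w) powr (q - 1)"
  shows "pnorm p (\<lambda>i. Rmin i - R0 i) = \<alpha>"
    and "pnorm p (\<lambda>i. R i - R0 i) \<le> \<alpha> \<Longrightarrow> (\<Sum>i\<in>UNIV. w i * Rmin i) \<le> (\<Sum>i\<in>UNIV. w i * R i)"
    and "pnorm p (\<lambda>i. R i - R0 i) \<le> \<alpha> \<Longrightarrow> (\<Sum>i\<in>UNIV. w i * R i) \<le> (\<Sum>i\<in>UNIV. w i * Rmin i)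
          \<Longrightarrow> R = Rmin"
proof -
  have pnorm_diff: "pnorm p (\<lambda>i. S i - R0 i) = pnorm p (\<lambda>i. R0 i - S i)" for S
    by (simp add: pnorm_def abs_minus_commute)
  have sum_diff: "(\<Sum>i\<in>UNIV. w i * S i) = (\<Sum>i\<in>UNIV. w i * R0 i) - (\<Sum>i\<in>UNIV. w i * (R0 i - S i))" for S
    by (simp add: algebra_simps sum_subtractf)
  have "R0 i - Rmin i = \<alpha> * (w i / pnorm q w) powr (q - 1)" for i
    by (simp add: Rmin)
  note attained = pnorm_dual_attained[OF p q pq w c, of \<alpha>, folded this]
  show "pnorm p (\<lambda>i. Rmin i - R0 i) = \<alpha>"
    using attained(1) \<alpha> by (simp add: pnorm_diff)
  assume R: "pnorm p (\<lambda>i. R i - R0 i) \<le> \<alpha>"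
  note dual = pnorm_dual_le[OF p q pq w c \<alpha> R[unfolded pnorm_diff]]
  show "(\<Sum>i\<in>UNIV. w i * Rmin i) \<le> (\<Sum>i\<in>UNIV. w i * R i)"
    using dual(1) attained(2) \<alpha> by (simp add: sum_diff[of Rmin] sum_diff[of R])
  assume "(\<Sum>i\<in>UNIV. w i * R i) \<le> (\<Sum>i\<in>UNIV. w i * Rmin i)"
  then have "(\<Sum>i\<in>UNIV. w i * (R0 i - R i)) = \<alpha> * pnorm q w"
    using dual(1) attained(2) \<alpha> by (simp add: sum_diff[of Rmin] sum_diff[of R])
  then have "(\<lambda>i. R0 i - R i) = (\<lambda>i. R0 i - Rmin i)"
    using dual(2) by (simp add: Rmin)
  then show "R = Rmin"
    by (simp add: fun_eq_iff)
qed

lemma invertible_matrix_inv: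
  fixes M :: "'a::field^'n^'n"
  assumes "invertible M"
  shows "M ** matrix_inv M = mat 1" and "matrix_inv M ** M = mat 1"
proof -
  have "\<exists>N. M ** N = mat 1 \<and> N ** M = mat 1"
    using assms unfolding invertible_def .
  from someI_ex[OF this] show "M ** matrix_inv M = mat 1" "matrix_inv M ** M = mat 1"
    unfolding matrix_inv_def by blast+
qed

lemma resolvent_mult_vector_nth:
  fixes A :: "real^'n::finite^'n"
  shows "((mat 1 - \<gamma> *\<^sub>R A) *v x) $ i = x $ i - \<gamma> * (\<Sum>j\<in>UNIV. A $ i $ j * x $ j)"
  by (simp add: matrix_vector_mult_diff_rdistrib scaleR_matrix_vector_assoc)
     (simp add: matrix_vector_mult_def sum_distrib_left mult.assoc)

lemma vector_mult_resolvent_nth: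
  fixes A :: "real^'n::finite^'n"
  shows "(x v* (mat 1 - \<gamma> *\<^sub>R A)) $ j = x $ j - \<gamma> * (\<Sum>i\<in>UNIV. x $ i * A $ i $ j)"
  by (simp add: vector_matrix_mult_diff_rdistrib vector_scaleR_matrix_ac)
     (simp add: vector_matrix_mult_def)

context
  fixes A :: "real^'n::finite^'n" and \<gamma> :: real
  assumes A_nonneg: "\<And>i j. 0 \<le> A $ i $ j" and A_row_sum: "\<And>i. (\<Sum>j\<in>UNIV. A $ i $ j) = 1"
    and \<gamma>: "0 \<le> \<gamma>" "\<gamma> < 1"
begin

lemma resolvent_solution_nonneg:
  assumes x: "(mat 1 - \<gamma> *\<^sub>R A) *v x = v" and v: "\<And>i. 0 \<le> v $ i"
  shows "0 \<le> x $ i"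
proof -
  have "Min (range (($) x)) \<in> range (($) x)"
    by (rule Min_in) auto
  then obtain k where k: "Min (range (($) x)) = x $ k"
    by (rule rangeE)
  have min: "x $ k \<le> x $ j" for j
    unfolding k[symmetric] by (rule Min_le) auto
  have "x $ k = v $ k + \<gamma> * (\<Sum>j\<in>UNIV. A $ k $ j * x $ j)"
    using arg_cong[OF x, of "\<lambda>u. u $ k"] by (simp add: resolvent_mult_vector_nth)
  moreover have "x $ k \<le> (\<Sum>j\<in>UNIV. A $ k $ j * x $ j)"
  proof -
    have "x $ k = (\<Sum>j\<in>UNIV. A $ k $ j * x $ k)"
      by (simp add: A_row_sum flip: sum_distrib_right)
    also have "\<dots> \<le> (\<Sum>j\<in>UNIV. A $ k $ j * x $ j)"
      by (intro sum_mono mult_left_mono min A_nonneg)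
    finally show ?thesis .
  qed
  ultimately have "(1 - \<gamma>) * x $ k \<ge> v $ k"
    using mult_left_mono[of _ _ \<gamma>] \<gamma> by (fastforce simp: algebra_simps)
  with v[of k] have "0 \<le> (1 - \<gamma>) * x $ k" by linarith
  then have "0 \<le> x $ k"
    using \<gamma> by (simp add: zero_le_mult_iff)
  then show ?thesis using min[of i] by linarith
qed

lemma resolvent_invertible: "invertible (mat 1 - \<gamma> *\<^sub>R A)"
proof -
  let ?M = "mat 1 - \<gamma> *\<^sub>R A"
  have "x = 0" if "?M *v x = 0" for x
  proof -
    have "?M *v (- x) = 0" using that matrix_vector_mult_diff_distrib[of ?M 0 x] by simp
    have "0 \<le> x $ i" "0 \<le> (- x) $ i" for i
      by (rule resolvent_solution_nonneg[OF that], simp)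
         (rule resolvent_solution_nonneg[OF \<open>?M *v (- x) = 0\<close>], simp)
    then show "x = 0" by (simp add: vec_eq_iff order_antisym)
  qed
  then have "inj ((*v) ?M)"
    by (intro linear_inj_on_iff_eq_0[THEN iffD2]) (auto simp: matrix_vector_mul_linear)
  then show ?thesis
    by (simp add: invertible_left_inverse matrix_left_invertible_injective)
qed

lemma resolvent_inverse_nonneg: "0 \<le> matrix_inv (mat 1 - \<gamma> *\<^sub>R A) $ i $ j"
proof -
  let ?M = "mat 1 - \<gamma> *\<^sub>R A"
  define e :: "real^'n" where "e = axis j 1"
  have "?M *v (matrix_inv ?M *v e) = e"
    using invertible_matrix_inv(1)[OF resolvent_invertible] by (simp add: matrix_vector_mul_assoc)
  then have "0 \<le> (matrix_inv ?M *v e) $ i"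
    by (rule resolvent_solution_nonneg) (simp add: e_def axis_def)
  then show ?thesis
    by (simp add: e_def matrix_vector_mult_def axis_def if_distrib cong: if_cong)
qed

end

lemma Ppi_nonneg: "stochastic_kernel P \<Longrightarrow> policy pol \<Longrightarrow> 0 \<le> Ppi P pol $ s $ t"
  unfolding Ppi_def stochastic_kernel_def policy_def by (auto intro!: sum_nonneg)

lemma Ppi_row_sum: "stochastic_kernel P \<Longrightarrow> policy pol \<Longrightarrow> (\<Sum>t\<in>UNIV. Ppi P pol $ s $ t) = 1"
  unfolding Ppi_def stochastic_kernel_def policy_def
  by (simp add: sum.swap[of _ UNIV UNIV] flip: sum_distrib_left)

lemma dstate_ge_initial:
  assumes P: "stochastic_kernel P" and pol: "policy pol" and \<gamma>: "0 \<le> \<gamma>" "\<gamma> < 1"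
    and \<mu>: "\<And>s. 0 \<le> \<mu> s"
  shows "\<mu> s \<le> dstate P \<gamma> \<mu> pol $ s"
proof -
  let ?A = "Ppi P pol"
  let ?M = "mat 1 - \<gamma> *\<^sub>R ?A"
  let ?d = "dstate P \<gamma> \<mu> pol"
  note resolvent = Ppi_nonneg[OF P pol] Ppi_row_sum[OF P pol] \<gamma>
  have d_nonneg: "0 \<le> ?d $ t" for t
    unfolding dstate_def vector_matrix_mult_def
    using \<mu> resolvent_inverse_nonneg[OF resolvent] by (auto intro!: sum_nonneg)
  have "?d v* ?M = (\<chi> s. \<mu> s)"
    unfolding dstate_def
    by (simp add: vector_matrix_mul_assoc invertible_matrix_inv(2)[OF resolvent_invertible[OF resolvent]])
  then have "?d $ s = \<mu> s + \<gamma> * (\<Sum>t\<in>UNIV. ?d $ t * ?A $ t $ s)"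
    using vector_mult_resolvent_nth[of ?d \<gamma> ?A s] by simp
  moreover have "0 \<le> \<gamma> * (\<Sum>t\<in>UNIV. ?d $ t * ?A $ t $ s)"
    using \<gamma> by (intro mult_nonneg_nonneg sum_nonneg) (auto intro: d_nonneg Ppi_nonneg[OF P pol])
  ultimately show ?thesis by linarith
qed

lemma docc_nonneg:
  assumes "stochastic_kernel P" "policy pol" "0 \<le> \<gamma>" "\<gamma> < 1" "\<And>s. 0 \<le> \<mu> s"
  shows "0 \<le> docc P \<gamma> \<mu> pol s a"
  using order_trans[OF assms(5) dstate_ge_initial[OF assms]] assms(2)
  unfolding docc_def policy_def by (intro mult_nonneg_nonneg) auto

lemma lpnorm_eq_pnorm: "lpnorm p f = pnorm p (case_prod f)"
  by (simp add: lpnorm_def pnorm_def case_prod_beta)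

lemma lpnorm_docc_pos:
  assumes P: "stochastic_kernel P" and pol: "policy pol" and \<gamma>: "0 \<le> \<gamma>" "\<gamma> < 1"
    and \<mu>: "\<And>s. 0 < \<mu> s" and "0 < q"
  shows "0 < lpnorm q (docc P \<gamma> \<mu> pol)"
proof -
  fix s
  have "\<exists>a. 0 < pol s a"
  proof (rule ccontr)
    assume "\<nexists>a. 0 < pol s a"
    then have "(\<Sum>a\<in>UNIV. pol s a) \<le> 0" by (intro sum_nonpos) (auto simp: not_less)
    with pol show False by (simp add: policy_def)
  qed
  then obtain a where "0 < pol s a" ..
  moreover have "0 < dstate P \<gamma> \<mu> pol $ s"
    using dstate_ge_initial[of P pol \<gamma> \<mu> s, OF P pol \<gamma> less_imp_le[OF \<mu>]] \<mu>[of s] by linarith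
  ultimately have "case_prod (docc P \<gamma> \<mu> pol) (s, a) \<noteq> 0"
    by (simp add: docc_def)
  then show ?thesis
    unfolding lpnorm_eq_pnorm using \<open>0 < q\<close> by (rule pnorm_pos[rotated])
qed

lemma Rworst_eq:
  fixes P :: "'s::finite \<Rightarrow> 'a::finite \<Rightarrow> 's \<Rightarrow> real"
  assumes p: "1 < p" and q: "1 < q" and pq: "1/p + 1/q = 1" and \<alpha>: "0 < \<alpha>"
    and d_nonneg: "\<And>s a. 0 \<le> docc P \<gamma> \<mu> pol s a" and d_pos: "0 < lpnorm q (docc P \<gamma> \<mu> pol)"
  shows "Rworst P \<gamma> \<mu> pol p R0 \<alpha> =
    (\<lambda>s a. R0 s a - \<alpha> * (docc P \<gamma> \<mu> pol s a / lpnorm q (docc P \<gamma> \<mu> pol)) powr (q - 1))"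
    (is "_ = ?Rmin")
proof -
  define w where "w = case_prod (docc P \<gamma> \<mu> pol)"
  have w_nonneg: "0 \<le> w i" for i
    using d_nonneg by (simp add: w_def split: prod.split)
  have ret: "ret P \<gamma> \<mu> pol R = (\<Sum>i\<in>UNIV. w i * case_prod R i)" for R
    by (simp add: ret_def w_def split_def)
  have ball: "R \<in> Rball p R0 \<alpha> \<longleftrightarrow> pnorm p (\<lambda>i. case_prod R i - case_prod R0 i) \<le> \<alpha>" for R
    by (simp add: Rball_def lpnorm_eq_pnorm split_def)
  define Rmin where "Rmin = ?Rmin"
  have Rmin_split: "case_prod Rmin i = case_prod R0 i - \<alpha> * (w i / pnorm q w) powr (q - 1)" for i
    by (auto simp: Rmin_def w_def lpnorm_eq_pnorm split: prod.split)
  note min = linear_min_on_pball[OF p q pq w_nonneg d_pos[unfolded lpnorm_eq_pnorm, folded w_def] \<alpha>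
      Rmin_split]
  have Rmin_in: "Rmin \<in> Rball p R0 \<alpha>"
    unfolding ball using min(1) by simp
  have Rmin_le: "ret P \<gamma> \<mu> pol Rmin \<le> ret P \<gamma> \<mu> pol R" if "R \<in> Rball p R0 \<alpha>" for R
    using that unfolding ball ret by (rule min(2))
  show ?thesis
    unfolding Rworst_def Rmin_def[symmetric]
  proof (rule the_equality)
    show "Rmin \<in> Rball p R0 \<alpha> \<and> (\<forall>R'\<in>Rball p R0 \<alpha>. ret P \<gamma> \<mu> pol Rmin \<le> ret P \<gamma> \<mu> pol R')"
      using Rmin_in Rmin_le by blast
  next
    fix R
    assume "R \<in> Rball p R0 \<alpha> \<and> (\<forall>R'\<in>Rball p R0 \<alpha>. ret P \<gamma> \<mu> pol R \<le> ret P \<gamma> \<mu> pol R')"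
    then have "R \<in> Rball p R0 \<alpha>" and "ret P \<gamma> \<mu> pol R \<le> ret P \<gamma> \<mu> pol Rmin"
      using Rmin_in by blast+
    then have "case_prod R = case_prod Rmin"
      unfolding ball ret by (rule min(3))
    then show "R = Rmin"
      by (metis curry_case_prod)
  qed
qed

theorem corollary2:
  fixes P :: "'s::finite \<Rightarrow> 'a::finite \<Rightarrow> 's \<Rightarrow> real"
    and \<mu> :: "'s \<Rightarrow> real" and \<gamma> p q \<alpha> :: real
    and R0 pol :: "'s \<Rightarrow> 'a \<Rightarrow> real" and s :: 's and a :: 'a
  assumes "stochastic_kernel P"
    and "0 \<le> \<gamma>" and "\<gamma> < 1"
    and "\<forall>s. \<mu> s > 0" and "(\<Sum>s\<in>UNIV. \<mu> s) = 1"
    and "1 < p" and "q = p / (p - 1)" and "\<alpha> > 0"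
    and "policy pol"
  shows "Qfun P \<gamma> pol (Rworst P \<gamma> \<mu> pol p R0 \<alpha>) s a =
           R0 s a + \<gamma> * (\<Sum>s'\<in>UNIV. P s a s' * vfun P \<gamma> pol (Rworst P \<gamma> \<mu> pol p R0 \<alpha>) $ s')
           - \<alpha> * (docc P \<gamma> \<mu> pol s a / lpnorm q (docc P \<gamma> \<mu> pol)) powr (q - 1)"
proof -
  note P = assms(1) and \<gamma> = assms(2,3) and pol = assms(9)
  \<comment> \<open>The normalisation of \<mu> is not needed: the worst-case reward depends on the occupancy
    only through its direction.\<close>
  have \<mu>: "\<And>s. 0 < \<mu> s" using assms(4) by blast
  have q: "1 < q" and pq: "1/p + 1/q = 1"
    using conjugate_exponent[OF assms(6)] assms(7) by simp_all
  have "Rworst P \<gamma> \<mu> pol p R0 \<alpha> s a =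
      R0 s a - \<alpha> * (docc P \<gamma> \<mu> pol s a / lpnorm q (docc P \<gamma> \<mu> pol)) powr (q - 1)"
    using Rworst_eq[OF assms(6) q pq assms(8) docc_nonneg[OF P pol \<gamma> less_imp_le[OF \<mu>]]
        lpnorm_docc_pos[OF P pol \<gamma> \<mu>]] q
    by simp
  then show ?thesis by (simp add: Qfun_def)
qed

end
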